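(* Let $R=\bigoplus_{\alpha\in\Gamma}R_{\alpha}$ be a graded integral domain and $\star$ a semistar operation on $R$. Then $N(\star):=\{f\in R[X]: f\neq0\text{ and }A_f^{\star}=R^{\star}\}$ is a saturated multiplicatively closed subset of $R[X]$.
   Context: $\Gamma$ is a commutative cancellative monoid (written additively) whose quotient group $\langle\Gamma\rangle$ is torsion-free. A graded integral domain $R=\bigoplus_{\alpha\in\Gamma}R_\alpha$ is an integral domain that is the direct sum of additive subgroups $R_\alpha$ with $R_\alpha R_\beta\subseteq R_{\alpha+\beta}$, with quotient field $K$. For $a\in R$, $C(a)$ is the ideal of $R$ generated by the homogeneous components of $a$; for $f=f_0+\cdots+f_nX^n\in R[X]$, $A_f:=\sum_i C(f_i)$. A semistar operation on $R$ is a map $\star$ from the set of nonzero $R$-submodules of $K$ to itself such that for all $0\ne x\in K$ and $E,F$: $(xE)^\star=xE^\star$; $E\subseteq F\Rightarrow E^\star\subseteq F^\star$; $E\subseteq E^\star$; $(E^\star)^\star=E^\star$. *)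

theory Defs
  imports "HOL-Computational_Algebra.Polynomial"
begin

text \<open>The ambient field K is a type 'k of class field; R is a subset of it.
  The grading monoid Gamma is a type 'g of class cancel_comm_monoid_add.\<close>

definition nsmul :: "nat \<Rightarrow> 'g::monoid_add \<Rightarrow> 'g" where
  "nsmul n a = (((+) a) ^^ n) 0"

text \<open>The quotient group of a cancellative commutative monoid is torsion-free iff
  n a = n b with n > 0 implies a = b.\<close>
definition torsion_free_quotient :: "'g::cancel_comm_monoid_add itself \<Rightarrow> bool" where
  "torsion_free_quotient _ \<longleftrightarrow>
     (\<forall>(n::nat) (a::'g) b. n > 0 \<longrightarrow> nsmul n a = nsmul n b \<longrightarrow> a = b)"

definition hom_family :: "('g \<Rightarrow> 'k::field set) \<Rightarrow> ('g \<Rightarrow> 'k) \<Rightarrow> bool" where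
  "hom_family Rg h \<longleftrightarrow> (\<forall>\<beta>. h \<beta> \<in> Rg \<beta>) \<and> finite {\<beta>. h \<beta> \<noteq> 0}"

definition hsum :: "('g \<Rightarrow> 'k::field) \<Rightarrow> 'k" where
  "hsum h = (\<Sum>\<beta>\<in>{\<beta>. h \<beta> \<noteq> 0}. h \<beta>)"

text \<open>R = direct sum of the R_alpha, R a graded integral domain with quotient field K
  (the whole type 'k).\<close>
definition graded_domain :: "('g::cancel_comm_monoid_add \<Rightarrow> 'k::field set) \<Rightarrow> 'k set \<Rightarrow> bool" where
  "graded_domain Rg R \<longleftrightarrow>
     (\<forall>\<alpha>. 0 \<in> Rg \<alpha> \<and> (\<forall>x\<in>Rg \<alpha>. \<forall>y\<in>Rg \<alpha>. x + y \<in> Rg \<alpha>) \<and> (\<forall>x\<in>Rg \<alpha>. - x \<in> Rg \<alpha>)) \<and>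
     (\<forall>\<alpha> \<beta>. \<forall>x\<in>Rg \<alpha>. \<forall>y\<in>Rg \<beta>. x * y \<in> Rg (\<alpha> + \<beta>)) \<and>
     (\<forall>h. hom_family Rg h \<and> hsum h = 0 \<longrightarrow> (\<forall>\<beta>. h \<beta> = 0)) \<and>
     R = {hsum h | h. hom_family Rg h} \<and>
     1 \<in> R \<and>
     (\<forall>z. \<exists>a\<in>R. \<exists>b\<in>R. b \<noteq> 0 \<and> z = a / b)"

text \<open>The alpha-homogeneous component of a (unique by directness).\<close>
definition hcomp :: "('g \<Rightarrow> 'k::field set) \<Rightarrow> 'k \<Rightarrow> 'g \<Rightarrow> 'k" where
  "hcomp Rg a \<alpha> = (THE x. \<exists>h. hom_family Rg h \<and> a = hsum h \<and> x = h \<alpha>)"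

definition gen_ideal :: "'k::field set \<Rightarrow> 'k set \<Rightarrow> 'k set" where
  "gen_ideal R S = {x. \<exists>F c. finite F \<and> F \<subseteq> S \<and> (\<forall>s\<in>F. c s \<in> R) \<and> x = (\<Sum>s\<in>F. c s * s)}"

definition Cont :: "('g \<Rightarrow> 'k::field set) \<Rightarrow> 'k set \<Rightarrow> 'k \<Rightarrow> 'k set" where
  "Cont Rg R a = gen_ideal R {hcomp Rg a \<alpha> | \<alpha>. True}"

text \<open>A_f = sum of C(f_i) = ideal generated by all homogeneous components of all coefficients.\<close>
definition Af :: "('g \<Rightarrow> 'k::field set) \<Rightarrow> 'k set \<Rightarrow> 'k poly \<Rightarrow> 'k set" where
  "Af Rg R f = gen_ideal R {hcomp Rg (coeff f i) \<alpha> | i \<alpha>. True}"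

definition Rpoly :: "'k::field set \<Rightarrow> 'k poly set" where
  "Rpoly R = {f. \<forall>i. coeff f i \<in> R}"

definition nz_submod :: "'k::field set \<Rightarrow> 'k set \<Rightarrow> bool" where
  "nz_submod R E \<longleftrightarrow> 0 \<in> E \<and> (\<forall>x\<in>E. \<forall>y\<in>E. x + y \<in> E) \<and> (\<forall>r\<in>R. \<forall>x\<in>E. r * x \<in> E) \<and> E \<noteq> {0}"

definition semistar :: "'k::field set \<Rightarrow> ('k set \<Rightarrow> 'k set) \<Rightarrow> bool" where
  "semistar R st \<longleftrightarrow>
     (\<forall>E. nz_submod R E \<longrightarrow> nz_submod R (st E)) \<and>
     (\<forall>x E. x \<noteq> 0 \<longrightarrow> nz_submod R E \<longrightarrow> st ((*) x ` E) = (*) x ` st E) \<and>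
     (\<forall>E F. nz_submod R E \<longrightarrow> nz_submod R F \<longrightarrow> E \<subseteq> F \<longrightarrow> st E \<subseteq> st F) \<and>
     (\<forall>E. nz_submod R E \<longrightarrow> E \<subseteq> st E) \<and>
     (\<forall>E. nz_submod R E \<longrightarrow> st (st E) = st E)"

definition Nstar :: "('g \<Rightarrow> 'k::field set) \<Rightarrow> 'k set \<Rightarrow> ('k set \<Rightarrow> 'k set) \<Rightarrow> 'k poly set" where
  "Nstar Rg R st = {f \<in> Rpoly R. f \<noteq> 0 \<and> st (Af Rg R f) = st R}"

definition saturated_mult_closed :: "'a::comm_ring_1 set \<Rightarrow> 'a set \<Rightarrow> bool" where
  "saturated_mult_closed A S \<longleftrightarrow> S \<subseteq> A \<and> 1 \<in> S \<and>
     (\<forall>f\<in>A. \<forall>g\<in>A. f * g \<in> S \<longleftrightarrow> f \<in> S \<and> g \<in> S)"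

end

theory Submission
  imports Defs "HOL-Library.Product_Plus"
begin

text \<open>Since the quotient group of \<open>\<Gamma>\<close> is torsion-free, Zorn's lemma gives a total order on
  \<open>\<nat> \<times> \<Gamma>\<close> compatible with addition. Indexing the homogeneous components of all
  coefficients of \<open>f\<close> by (exponent, degree), the families of \<open>f\<close> and \<open>g\<close> convolve to that of
  \<open>f g\<close>, so a Gauss-type induction that strips off greatest terms shows that each product of
  a generator of \<open>A\<^sub>f\<close> with one of \<open>A\<^sub>g\<close> has a power in \<open>A\<^sub>f\<^sub>g\<close>. Hence
  \<open>A\<^sub>f\<^sub>g \<subseteq> A\<^sub>f \<inter> A\<^sub>g\<close> and \<open>A\<^sub>f A\<^sub>g \<subseteq> rad A\<^sub>f\<^sub>g\<close>. A semistar operation satisfies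
  \<open>(E F)\<^sup>\<star> = R\<^sup>\<star>\<close> whenever \<open>E\<^sup>\<star> = F\<^sup>\<star> = R\<^sup>\<star>\<close>, and so \<open>J\<^sup>\<star> = R\<^sup>\<star>\<close> passes from a finitely
  generated \<open>J\<close> to any ideal containing a power of each generator; thus
  \<open>A\<^sub>f\<^sub>g\<^sup>\<star> = R\<^sup>\<star>\<close> if and only if \<open>A\<^sub>f\<^sup>\<star> = A\<^sub>g\<^sup>\<star> = R\<^sup>\<star>\<close>.\<close>

section \<open>Compatible orders on torsion-free monoids\<close>

lemma nsmul_0 [simp]: "nsmul 0 a = 0"
  by (simp add: nsmul_def)

lemma nsmul_Suc [simp]: "nsmul (Suc n) a = a + nsmul n a"
  by (simp add: nsmul_def)

lemma nsmul_add_left: "nsmul (m + n) (a::'g::comm_monoid_add) = nsmul m a + nsmul n a"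
  by (induct m) (simp_all add: ac_simps)

lemma nsmul_add_right: "nsmul n ((a::'g::comm_monoid_add) + b) = nsmul n a + nsmul n b"
  by (induct n) (simp_all add: ac_simps)

lemma nsmul_nsmul: "nsmul m (nsmul n (a::'g::comm_monoid_add)) = nsmul (m * n) a"
  by (induct m) (simp_all add: nsmul_add_left)

lemma nsmul_nat: "nsmul n (i::nat) = n * i"
  by (induct n) simp_all

lemma nsmul_prod: "nsmul n (x::'a::monoid_add \<times> 'b::monoid_add) = (nsmul n (fst x), nsmul n (snd x))"
  by (induct n) (simp_all add: prod_eq_iff)

lemma torsion_free_quotientD:
  "torsion_free_quotient TYPE('g::cancel_comm_monoid_add) \<Longrightarrow> n > 0 \<Longrightarrow> nsmul n a = nsmul n b \<Longrightarrow> a = (b::'g)"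
  unfolding torsion_free_quotient_def by blast

lemma torsion_free_quotient_nat: "torsion_free_quotient TYPE(nat)"
  unfolding torsion_free_quotient_def by (simp add: nsmul_nat)

lemma torsion_free_quotient_prod:
  assumes "torsion_free_quotient TYPE('a::cancel_comm_monoid_add)"
    and "torsion_free_quotient TYPE('b::cancel_comm_monoid_add)"
  shows "torsion_free_quotient TYPE('a \<times> 'b)"
  unfolding torsion_free_quotient_def
  using assms by (auto simp: nsmul_prod prod_eq_iff dest: torsion_free_quotientD)

text \<open>Cancellation of positive multiples is what allows an incomparable pair to be adjoined
  (\<open>order_extension\<close> below); the identity relation has it exactly when the quotient
  group is torsion-free.\<close>
locale admissible_order =
  fixes r :: "('g::cancel_comm_monoid_add \<times> 'g) set"
  assumes refl [simp, intro]: "(a, a) \<in> r"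
    and trans: "(a, b) \<in> r \<Longrightarrow> (b, c) \<in> r \<Longrightarrow> (a, c) \<in> r"
    and antisym: "(a, b) \<in> r \<Longrightarrow> (b, a) \<in> r \<Longrightarrow> a = b"
    and add_right: "(a, b) \<in> r \<Longrightarrow> (a + c, b + c) \<in> r"
    and cancel_right: "(a + c, b + c) \<in> r \<Longrightarrow> (a, b) \<in> r"
    and nsmul_cancel: "n > 0 \<Longrightarrow> (nsmul n a, nsmul n b) \<in> r \<Longrightarrow> (a, b) \<in> r"
begin

lemma add_mono: "(a, b) \<in> r \<Longrightarrow> (c, d) \<in> r \<Longrightarrow> (a + c, b + d) \<in> r"
  by (metis add_right add.commute trans)

lemma nsmul_mono: "(a, b) \<in> r \<Longrightarrow> (nsmul n a, nsmul n b) \<in> r"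
  by (induct n) (simp_all add: add_mono)

end

lemma admissible_order_Id:
  "torsion_free_quotient TYPE('g::cancel_comm_monoid_add) \<Longrightarrow> admissible_order (Id :: ('g \<times> 'g) set)"
  by unfold_locales (auto dest: torsion_free_quotientD)

lemma admissible_order_Union_chain:
  assumes "C \<in> chains {r. admissible_order r}" and "C \<noteq> {}"
  shows "admissible_order (\<Union>C)"
proof -
  have adm: "admissible_order r" if "r \<in> C" for r
    using assms(1) that unfolding chains_def chain_subset_def by blast
  have common: "\<exists>r\<in>C. (a, b) \<in> r \<and> (c, d) \<in> r" if "(a, b) \<in> \<Union>C" "(c, d) \<in> \<Union>C" for a b c d
    using that chainsD[OF assms(1)] by blast
  show ?thesis
  proof
    fix a show "(a, a) \<in> \<Union>C"
      using assms(2) admissible_order.refl[OF adm] by blast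
  next
    fix a b c assume "(a, b) \<in> \<Union>C" "(b, c) \<in> \<Union>C"
    then show "(a, c) \<in> \<Union>C"
      using common admissible_order.trans[OF adm] by blast
  next
    fix a b assume "(a, b) \<in> \<Union>C" "(b, a) \<in> \<Union>C"
    then show "a = b"
      using common admissible_order.antisym[OF adm] by blast
  qed (use admissible_order.add_right[OF adm] admissible_order.cancel_right[OF adm]
         admissible_order.nsmul_cancel[OF adm] in blast)+
qed

text \<open>Adjoining the relation \<open>a \<le> b\<close> for incomparable \<open>a, b\<close>: \<open>x \<le> y\<close> holds if
  \<open>n x + k b \<le> n y + k a\<close> for some \<open>n > 0\<close>. Antisymmetry survives because \<open>k b \<le> k a\<close>
  with \<open>k > 0\<close> would force \<open>b \<le> a\<close>.\<close>
definition order_extension :: "('g::cancel_comm_monoid_add \<times> 'g) set \<Rightarrow> 'g \<Rightarrow> 'g \<Rightarrow> ('g \<times> 'g) set"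
  where "order_extension r a b =
    {(x, y). \<exists>n k. n > 0 \<and> (nsmul n x + nsmul k b, nsmul n y + nsmul k a) \<in> r}"

lemma order_extensionI:
  "n > 0 \<Longrightarrow> (nsmul n x + nsmul k b, nsmul n y + nsmul k a) \<in> r \<Longrightarrow> (x, y) \<in> order_extension r a b"
  unfolding order_extension_def by blast

lemma order_extensionE:
  assumes "(x, y) \<in> order_extension r a b"
  obtains n k where "n > 0" "(nsmul n x + nsmul k b, nsmul n y + nsmul k a) \<in> r"
  using assms unfolding order_extension_def by blast

context admissible_order
begin

lemma subset_order_extension: "r \<subseteq> order_extension r a b"
  by (auto intro: order_extensionI[of 1 _ 0])

lemma order_extension_pair: "(a, b) \<in> order_extension r a b"
  by (rule order_extensionI[of 1 _ 1]) (simp_all add: add.commute)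

lemma order_extension_combine:
  assumes "(x, y) \<in> order_extension r a b" "(y', z) \<in> order_extension r a b"
  obtains n k where "n > 0"
    "(nsmul n x + nsmul n y' + nsmul k b, nsmul n y + nsmul n z + nsmul k a) \<in> r"
    "k = 0 \<Longrightarrow> (x, y) \<in> r \<and> (y', z) \<in> r"
proof -
  obtain n k where n: "n > 0" "(nsmul n x + nsmul k b, nsmul n y + nsmul k a) \<in> r"
    using assms(1) by (rule order_extensionE)
  obtain n' k' where n': "n' > 0" "(nsmul n' y' + nsmul k' b, nsmul n' z + nsmul k' a) \<in> r"
    using assms(2) by (rule order_extensionE)
  have "(nsmul n' (nsmul n x + nsmul k b) + nsmul n (nsmul n' y' + nsmul k' b),
         nsmul n' (nsmul n y + nsmul k a) + nsmul n (nsmul n' z + nsmul k' a)) \<in> r"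
    by (intro add_mono nsmul_mono n n')
  then have rel: "(nsmul (n' * n) x + nsmul (n' * n) y' + nsmul (n' * k + n * k') b,
              nsmul (n' * n) y + nsmul (n' * n) z + nsmul (n' * k + n * k') a) \<in> r"
    by (simp add: nsmul_add_right nsmul_nsmul nsmul_add_left ac_simps)
  have k0: "(x, y) \<in> r \<and> (y', z) \<in> r" if "n' * k + n * k' = 0"
  proof -
    have "k = 0" "k' = 0"
      using that n(1) n'(1) by simp_all
    then have "(nsmul n x, nsmul n y) \<in> r" "(nsmul n' y', nsmul n' z) \<in> r"
      using n(2) n'(2) by simp_all
    then show ?thesis
      using nsmul_cancel n(1) n'(1) by blast
  qed
  have "n' * n > 0"
    using n(1) n'(1) by simp
  then show ?thesis
    using rel k0 by (rule that)
qed

lemma admissible_order_extension: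
  assumes incomparable: "(a, b) \<notin> r" "(b, a) \<notin> r"
  shows "admissible_order (order_extension r a b)"
proof
  fix x show "(x, x) \<in> order_extension r a b"
    using subset_order_extension by blast
next
  fix x y z assume "(x, y) \<in> order_extension r a b" "(y, z) \<in> order_extension r a b"
  then obtain n k where n: "n > 0"
    "(nsmul n x + nsmul n y + nsmul k b, nsmul n y + nsmul n z + nsmul k a) \<in> r"
    by (rule order_extension_combine)
  then have "((nsmul n x + nsmul k b) + nsmul n y, (nsmul n z + nsmul k a) + nsmul n y) \<in> r"
    by (simp add: ac_simps)
  then show "(x, z) \<in> order_extension r a b"
    using n(1) by (blast intro: order_extensionI cancel_right)
next
  fix x y assume "(x, y) \<in> order_extension r a b" "(y, x) \<in> order_extension r a b"
  then obtain n k where "n > 0"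
    "(nsmul n x + nsmul n y + nsmul k b, nsmul n y + nsmul n x + nsmul k a) \<in> r"
    and k0: "k = 0 \<Longrightarrow> (x, y) \<in> r \<and> (y, x) \<in> r"
    by (rule order_extension_combine) (rule that)
  then have "(nsmul k b + (nsmul n x + nsmul n y), nsmul k a + (nsmul n x + nsmul n y)) \<in> r"
    by (simp add: ac_simps)
  then have "(nsmul k b, nsmul k a) \<in> r"
    by (rule cancel_right)
  then have "k = 0"
    using incomparable(2) nsmul_cancel[of k b a] by (cases "k = 0") simp_all
  then show "x = y"
    using k0 antisym by blast
next
  fix x y c assume "(x, y) \<in> order_extension r a b"
  then obtain n k where n: "n > 0" "(nsmul n x + nsmul k b, nsmul n y + nsmul k a) \<in> r"
    by (rule order_extensionE)
  then have "((nsmul n x + nsmul k b) + nsmul n c, (nsmul n y + nsmul k a) + nsmul n c) \<in> r"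
    using add_right by blast
  then have "(nsmul n (x + c) + nsmul k b, nsmul n (y + c) + nsmul k a) \<in> r"
    by (simp add: nsmul_add_right ac_simps)
  then show "(x + c, y + c) \<in> order_extension r a b"
    by (rule order_extensionI[OF n(1)])
next
  fix x y c assume "(x + c, y + c) \<in> order_extension r a b"
  then obtain n k where n: "n > 0" "(nsmul n (x + c) + nsmul k b, nsmul n (y + c) + nsmul k a) \<in> r"
    by (rule order_extensionE)
  then have "((nsmul n x + nsmul k b) + nsmul n c, (nsmul n y + nsmul k a) + nsmul n c) \<in> r"
    by (simp add: nsmul_add_right ac_simps)
  then have "(nsmul n x + nsmul k b, nsmul n y + nsmul k a) \<in> r"
    by (rule cancel_right)
  then show "(x, y) \<in> order_extension r a b"
    by (rule order_extensionI[OF n(1)])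
next
  fix m x y assume m: "m > 0" and "(nsmul m x, nsmul m y) \<in> order_extension r a b"
  then obtain n k where n: "n > 0" "(nsmul n (nsmul m x) + nsmul k b, nsmul n (nsmul m y) + nsmul k a) \<in> r"
    by (blast elim: order_extensionE)
  then have "(nsmul (n * m) x + nsmul k b, nsmul (n * m) y + nsmul k a) \<in> r"
    by (simp add: nsmul_nsmul)
  then show "(x, y) \<in> order_extension r a b"
    using n(1) m by (intro order_extensionI) simp_all
qed

end

lemma exists_total_admissible_order:
  assumes "torsion_free_quotient TYPE('g)"
  obtains r :: "('g::cancel_comm_monoid_add \<times> 'g) set"
  where "admissible_order r" "\<And>a b. (a, b) \<in> r \<or> (b, a) \<in> r"
proof -
  let ?A = "{r :: ('g \<times> 'g) set. admissible_order r}"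
  have "\<exists>U\<in>?A. \<forall>X\<in>C. X \<subseteq> U" if C: "C \<in> chains ?A" for C
  proof (cases "C = {}")
    case True
    then show ?thesis
      using admissible_order_Id[OF assms] by blast
  next
    case False
    then have "\<Union>C \<in> ?A"
      using admissible_order_Union_chain[OF C] by simp
    then show ?thesis
      by blast
  qed
  then obtain M where "M \<in> ?A" and maximal: "\<forall>X\<in>?A. M \<subseteq> X \<longrightarrow> X = M"
    using Zorn_Lemma2[of ?A] by blast
  then have M: "admissible_order M"
    by simp
  have "(a, b) \<in> M \<or> (b, a) \<in> M" for a b
  proof (rule ccontr)
    assume incomparable: "\<not> ((a, b) \<in> M \<or> (b, a) \<in> M)"
    then have "order_extension M a b \<in> ?A"
      using admissible_order.admissible_order_extension[OF M] by simp
    then have "order_extension M a b = M"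
      using maximal admissible_order.subset_order_extension[OF M] by blast
    then show False
      using incomparable admissible_order.order_extension_pair[OF M, of a b] by simp
  qed
  with M show ?thesis
    by (rule that)
qed

section \<open>Subrings, ideals and radicals\<close>

locale subring =
  fixes R :: "'a::comm_ring_1 set"
  assumes zero_closed [simp, intro]: "0 \<in> R"
    and one_closed [simp, intro]: "1 \<in> R"
    and add_closed: "x \<in> R \<Longrightarrow> y \<in> R \<Longrightarrow> x + y \<in> R"
    and mult_closed: "x \<in> R \<Longrightarrow> y \<in> R \<Longrightarrow> x * y \<in> R"
    and uminus_closed: "x \<in> R \<Longrightarrow> - x \<in> R"
begin

lemma sum_closed: "(\<And>x. x \<in> A \<Longrightarrow> f x \<in> R) \<Longrightarrow> sum f A \<in> R"
  by (induct A rule: infinite_finite_induct) (auto intro: add_closed)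

lemma power_closed: "x \<in> R \<Longrightarrow> x ^ n \<in> R"
  by (induct n) (auto intro: mult_closed)

end

definition submodule :: "'a::comm_ring_1 set \<Rightarrow> 'a set \<Rightarrow> bool" where
  "submodule R E \<longleftrightarrow> 0 \<in> E \<and> (\<forall>x\<in>E. \<forall>y\<in>E. x + y \<in> E) \<and> (\<forall>r\<in>R. \<forall>x\<in>E. r * x \<in> E)"

definition ideal :: "'a::comm_ring_1 set \<Rightarrow> 'a set \<Rightarrow> bool" where
  "ideal R I \<longleftrightarrow> I \<subseteq> R \<and> submodule R I"

definition radical :: "'a::comm_ring_1 set \<Rightarrow> 'a set" where
  "radical I = {x. \<exists>n. x ^ n \<in> I}"

lemma submoduleD:
  assumes "submodule R E"
  shows "0 \<in> E" "x \<in> E \<Longrightarrow> y \<in> E \<Longrightarrow> x + y \<in> E" "r \<in> R \<Longrightarrow> x \<in> E \<Longrightarrow> r * x \<in> E"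
  using assms unfolding submodule_def by auto

lemma submodule_sum: "submodule R E \<Longrightarrow> (\<And>x. x \<in> A \<Longrightarrow> f x \<in> E) \<Longrightarrow> sum f A \<in> E"
  by (induct A rule: infinite_finite_induct) (auto intro: submoduleD)

lemma nz_submod_iff_submodule: "nz_submod R E \<longleftrightarrow> submodule R E \<and> E \<noteq> {0}"
  unfolding nz_submod_def submodule_def by blast

lemma nz_submod_imp_submodule: "nz_submod R E \<Longrightarrow> submodule R E"
  by (simp add: nz_submod_iff_submodule)

lemma idealD:
  assumes "ideal R I"
  shows "I \<subseteq> R" "0 \<in> I" "x \<in> I \<Longrightarrow> y \<in> I \<Longrightarrow> x + y \<in> I" "r \<in> R \<Longrightarrow> x \<in> I \<Longrightarrow> r * x \<in> I"
    "r \<in> R \<Longrightarrow> x \<in> I \<Longrightarrow> x * r \<in> I"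
  using assms submoduleD[of R I] unfolding ideal_def by (auto simp: mult.commute)

lemma ideal_sum: "ideal R I \<Longrightarrow> (\<And>x. x \<in> A \<Longrightarrow> f x \<in> I) \<Longrightarrow> sum f A \<in> I"
  unfolding ideal_def by (blast intro: submodule_sum)

context subring
begin

lemma submodule_self: "submodule R R"
  unfolding submodule_def using add_closed mult_closed by blast

lemma ideal_diff:
  assumes "ideal R I" "x \<in> I" "y \<in> I"
  shows "x - y \<in> I"
proof -
  have "(- 1) * y \<in> I"
    using assms idealD(4) uminus_closed[OF one_closed] by blast
  then show ?thesis
    using assms idealD(3)[of R I x "(- 1) * y"] by simp
qed

text \<open>The ideal \<open>I + a (I : a^s)\<close>.\<close>
definition colon_extension :: "'a set \<Rightarrow> 'a \<Rightarrow> nat \<Rightarrow> 'a set" where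
  "colon_extension I a s = {u + a * w | u w. u \<in> I \<and> w \<in> R \<and> a ^ s * w \<in> I}"

lemma subset_colon_extension: "ideal R I \<Longrightarrow> I \<subseteq> colon_extension I a s"
  unfolding colon_extension_def by (force dest: idealD(2))

lemma colon_extensionE:
  assumes "x \<in> colon_extension I a s"
  obtains u w where "u \<in> I" "w \<in> R" "a ^ s * w \<in> I" "x = u + a * w"
  using assms unfolding colon_extension_def by blast

lemma colon_extensionI: "u \<in> I \<Longrightarrow> w \<in> R \<Longrightarrow> a ^ s * w \<in> I \<Longrightarrow> u + a * w \<in> colon_extension I a s"
  unfolding colon_extension_def by blast

lemma ideal_colon_extension:
  assumes I: "ideal R I" and a: "a \<in> R"
  shows "ideal R (colon_extension I a s)"
  unfolding ideal_def submodule_def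
proof (intro conjI ballI subsetI)
  fix x assume "x \<in> colon_extension I a s"
  then obtain u w where "u \<in> I" "w \<in> R" "x = u + a * w"
    by (rule colon_extensionE)
  then show "x \<in> R"
    using a idealD(1)[OF I] add_closed mult_closed by blast
next
  show "0 \<in> colon_extension I a s"
    using subset_colon_extension[OF I] idealD(2)[OF I] by blast
next
  fix x y assume "x \<in> colon_extension I a s" "y \<in> colon_extension I a s"
  then obtain u w u' w' where uw: "u \<in> I" "w \<in> R" "a ^ s * w \<in> I" "x = u + a * w"
    and uw': "u' \<in> I" "w' \<in> R" "a ^ s * w' \<in> I" "y = u' + a * w'"
    by (meson colon_extensionE)
  have "(u + u') + a * (w + w') \<in> colon_extension I a s"
  proof (rule colon_extensionI)
    show "u + u' \<in> I" "w + w' \<in> R"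
      using uw uw' idealD(3)[OF I] add_closed by blast+
    show "a ^ s * (w + w') \<in> I"
      using idealD(3)[OF I uw(3) uw'(3)] by (simp add: distrib_left)
  qed
  then show "x + y \<in> colon_extension I a s"
    using uw(4) uw'(4) by (simp add: algebra_simps)
next
  fix c x assume c: "c \<in> R" and "x \<in> colon_extension I a s"
  then obtain u w where uw: "u \<in> I" "w \<in> R" "a ^ s * w \<in> I" "x = u + a * w"
    by (meson colon_extensionE)
  have "c * u + a * (c * w) \<in> colon_extension I a s"
  proof (rule colon_extensionI)
    show "c * u \<in> I" "c * w \<in> R"
      using uw c idealD(4)[OF I] mult_closed by blast+
    show "a ^ s * (c * w) \<in> I"
      using idealD(4)[OF I c uw(3)] by (simp add: ac_simps)
  qed
  then show "c * x \<in> colon_extension I a s"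
    using uw(4) by (simp add: algebra_simps)
qed

text \<open>Expand \<open>(u + a w)^s - (a w)^s\<close>, a multiple of \<open>u\<close>.\<close>
lemma power_in_ideal_of_colon_extension:
  assumes I: "ideal R I" and a: "a \<in> R" and s: "s \<ge> 1" and x: "x \<in> colon_extension I a s"
  shows "x ^ s \<in> I"
proof -
  obtain u w where u: "u \<in> I" and w: "w \<in> R" and aw: "a ^ s * w \<in> I" and x: "x = u + a * w"
    using x by (rule colon_extensionE)
  have uR: "u \<in> R"
    using u idealD(1)[OF I] by blast
  have "(a * w) ^ s = (a ^ s * w) * w ^ (s - 1)"
    using s by (cases s) (simp_all add: power_mult_distrib algebra_simps)
  then have first: "(a * w) ^ s \<in> I"
    using idealD(5)[OF I power_closed[OF w] aw] by simp
  let ?S = "\<Sum>i<s. (a * w) ^ (s - Suc i) * x ^ i"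
  have "x \<in> R"
    using uR a w x add_closed mult_closed by blast
  then have "?S \<in> R"
    using a w by (intro sum_closed mult_closed power_closed)
  then have "u * ?S \<in> I"
    using idealD(5)[OF I _ u] by blast
  moreover have "x ^ s = (a * w) ^ s + u * ?S"
    using power_diff_sumr2[of x s "a * w"] x by (simp add: algebra_simps)
  ultimately show ?thesis
    using idealD(3)[OF I first] by simp
qed

end

section \<open>Convolution of finitely supported families\<close>

definition supp :: "('m \<Rightarrow> 'a::zero) \<Rightarrow> 'm set" where
  "supp F = {p. F p \<noteq> 0}"

lemma supp_empty_imp_zero: "supp H = {} \<Longrightarrow> H q = 0"
  by (auto simp: supp_def)

definition convolution :: "('m::comm_monoid_add \<Rightarrow> 'a::comm_ring_1) \<Rightarrow> ('m \<Rightarrow> 'a) \<Rightarrow> 'm \<Rightarrow> 'a" where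
  "convolution F H m = (\<Sum>x\<in>{x\<in>supp F \<times> supp H. fst x + snd x = m}. F (fst x) * H (snd x))"

lemma convolution_eq_sum_superset:
  assumes "finite S" "finite T" "supp F \<subseteq> S" "supp H \<subseteq> T"
  shows "convolution F H m = (\<Sum>x\<in>{x\<in>S \<times> T. fst x + snd x = m}. F (fst x) * H (snd x))"
  unfolding convolution_def
  by (rule sum.mono_neutral_left) (use assms in \<open>auto simp: supp_def\<close>)

lemma supp_linear_combination:
  "supp (\<lambda>q. c * H q + d * E q :: 'a::comm_ring_1) \<subseteq> supp H \<union> supp E"
  by (auto simp: supp_def)

lemma convolution_linear_right:
  assumes "finite (supp F)" "finite (supp H)" "finite (supp E)"
  shows "convolution F (\<lambda>q. c * H q + d * E q) m = c * convolution F H m + d * convolution F E m"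
proof -
  let ?A = "{x\<in>supp F \<times> (supp H \<union> supp E). fst x + snd x = m}"
  have "convolution F (\<lambda>q. c * H q + d * E q) m
      = (\<Sum>x\<in>?A. F (fst x) * (c * H (snd x) + d * E (snd x)))"
    by (rule convolution_eq_sum_superset) (use assms supp_linear_combination[of c H d E] in auto)
  also have "\<dots> = c * (\<Sum>x\<in>?A. F (fst x) * H (snd x)) + d * (\<Sum>x\<in>?A. F (fst x) * E (snd x))"
    by (simp add: sum_distrib_left sum.distrib algebra_simps)
  also have "\<dots> = c * convolution F H m + d * convolution F E m"
    using assms by (simp add: convolution_eq_sum_superset[of "supp F" "supp H \<union> supp E"])
  finally show ?thesis .
qed

lemma convolution_linear_left:
  assumes "finite (supp F)" "finite (supp H)" "finite (supp E)"
  shows "convolution (\<lambda>p. c * F p + d * E p) H m = c * convolution F H m + d * convolution E H m"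
proof -
  let ?A = "{x\<in>(supp F \<union> supp E) \<times> supp H. fst x + snd x = m}"
  have "convolution (\<lambda>p. c * F p + d * E p) H m
      = (\<Sum>x\<in>?A. (c * F (fst x) + d * E (fst x)) * H (snd x))"
    by (rule convolution_eq_sum_superset) (use assms supp_linear_combination[of c F d E] in auto)
  also have "\<dots> = c * (\<Sum>x\<in>?A. F (fst x) * H (snd x)) + d * (\<Sum>x\<in>?A. E (fst x) * H (snd x))"
    by (simp add: sum_distrib_left sum.distrib algebra_simps)
  also have "\<dots> = c * convolution F H m + d * convolution E H m"
    using assms by (simp add: convolution_eq_sum_superset[of "supp F \<union> supp E" "supp H"])
  finally show ?thesis .
qed

lemma convolution_in_ideal_left:
  assumes "ideal R I" "\<And>p. F p \<in> I" "\<And>q. H q \<in> R"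
  shows "convolution F H m \<in> I"
  unfolding convolution_def by (rule ideal_sum[OF assms(1)]) (intro idealD(5)[OF assms(1)] assms)

lemma convolution_in_ideal_right:
  assumes "ideal R I" "\<And>p. F p \<in> R" "\<And>q. H q \<in> I"
  shows "convolution F H m \<in> I"
  unfolding convolution_def by (rule ideal_sum[OF assms(1)]) (intro idealD(4)[OF assms(1)] assms)

locale total_admissible_order = admissible_order +
  assumes total: "(a, b) \<in> r \<or> (b, a) \<in> r"
begin

lemma finite_has_greatest: "finite S \<Longrightarrow> S \<noteq> {} \<Longrightarrow> \<exists>t\<in>S. \<forall>x\<in>S. (x, t) \<in> r"
proof (induction S rule: finite_ne_induct)
  case (singleton x)
  then show ?case by auto
next
  case (insert x S)
  then obtain t where t: "t \<in> S" "\<forall>y\<in>S. (y, t) \<in> r"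
    by blast
  show ?case
  proof (cases "(x, t) \<in> r")
    case True
    then show ?thesis using t by auto
  next
    case False
    then have "\<forall>y\<in>insert x S. (y, x) \<in> r"
      using t total trans by blast
    then show ?thesis by blast
  qed
qed

lemma convolution_greatest:
  assumes "tF \<in> supp F" "\<forall>p\<in>supp F. (p, tF) \<in> r" and "tH \<in> supp H" "\<forall>q\<in>supp H. (q, tH) \<in> r"
  shows "convolution F H (tF + tH) = F tF * H tH"
proof -
  have "p = tF \<and> q = tH" if "p \<in> supp F" "q \<in> supp H" "p + q = tF + tH" for p q
  proof -
    have "(p + q, p + tH) \<in> r" "(p + tH, tF + tH) \<in> r"
      using add_right[of q tH p] add_right[of p tF tH] assms that by (simp_all add: add.commute)
    then have "p + q = p + tH"
      using antisym[of "p + q" "p + tH"] that(3) by simp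
    then show ?thesis
      using that(3) by simp
  qed
  then have "{x\<in>supp F \<times> supp H. fst x + snd x = tF + tH} = {(tF, tH)}"
    using assms by auto
  then show ?thesis
    unfolding convolution_def by simp
qed

text \<open>Induction on the support of \<open>H\<close>: subtracting its greatest term, which \<open>F tF\<close>
  multiplies into \<open>I\<close>, costs one more factor \<open>F tF\<close>.\<close>
lemma greatest_power_mult_in_ideal:
  fixes F H :: "'a \<Rightarrow> 'k::comm_ring_1"
  assumes R: "subring R" and I: "ideal R I"
    and F: "finite (supp F)" "\<And>p. F p \<in> R"
    and tF: "tF \<in> supp F" "\<forall>p\<in>supp F. (p, tF) \<in> r"
  shows "finite (supp H) \<Longrightarrow> card (supp H) \<le> n \<Longrightarrow> (\<And>q. H q \<in> R)
    \<Longrightarrow> (\<And>m. convolution F H m \<in> I) \<Longrightarrow> F tF ^ n * H q \<in> I"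
proof (induction n arbitrary: H q)
  case 0
  then show ?case
    using idealD(2)[OF I] by (simp add: supp_empty_imp_zero)
next
  case (Suc n)
  show ?case
  proof (cases "supp H = {}")
    case True
    then show ?thesis
      using idealD(2)[OF I] by (simp add: supp_empty_imp_zero)
  next
    case False
    obtain tH where tH: "tH \<in> supp H" "\<forall>q\<in>supp H. (q, tH) \<in> r"
      using finite_has_greatest[OF Suc.prems(1) False] by blast
    define a where "a = F tF"
    have aR: "a \<in> R"
      using F(2) a_def by simp
    have aH: "a * H tH \<in> I"
      using convolution_greatest[OF tF tH] Suc.prems(4) a_def by metis
    define E where "E = (\<lambda>q. if q = tH then a * H tH else 0)"
    define H' where "H' = (\<lambda>q. a * H q + (- 1) * E q)"
    have E: "finite (supp E)" "\<And>q. E q \<in> I"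
      using aH idealD(2)[OF I] by (auto simp: E_def supp_def)
    have conv': "convolution F H' m \<in> I" for m
    proof -
      have "convolution F H' m = a * convolution F H m - convolution F E m"
        using convolution_linear_right[OF F(1) Suc.prems(1) E(1), of a "- 1" m]
        unfolding H'_def by simp
      moreover have "convolution F E m \<in> I"
        using convolution_in_ideal_right[OF I, of F E] F(2) E(2) by blast
      ultimately show ?thesis
        using subring.ideal_diff[OF R I] idealD(4)[OF I aR Suc.prems(4)] by simp
    qed
    have H'_tH: "H' tH = 0" and H'_other: "q \<noteq> tH \<Longrightarrow> H' q = a * H q" for q
      by (simp_all add: H'_def E_def)
    have supp: "supp H' \<subseteq> supp H - {tH}"
      by (auto simp: supp_def H'_def E_def)
    then have fin': "finite (supp H')"
      using Suc.prems(1) finite_subset by blast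
    have card': "card (supp H') \<le> n"
      using card_mono[OF _ supp] Suc.prems(1,2) tH(1) by simp
    have R': "H' q \<in> R" for q
      using H'_tH H'_other Suc.prems(3) subring.mult_closed[OF R aR] subring.zero_closed[OF R]
      by (cases "q = tH") simp_all
    have IH: "a ^ n * H' q \<in> I" for q
      using Suc.IH[OF fin' card' R' conv'] unfolding a_def .
    show ?thesis
    proof (cases "q = tH")
      case True
      have "a ^ Suc n * H q = a ^ n * (a * H tH)"
        using True by (simp add: mult_ac)
      then show ?thesis
        using idealD(4)[OF I subring.power_closed[OF R aR] aH] unfolding a_def by simp
    next
      case False
      have "a ^ Suc n * H q = a ^ n * H' q"
        using H'_other[OF False] by (simp add: mult_ac)
      then show ?thesis
        using IH unfolding a_def by simp
    qed
  qed
qed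

text \<open>Induction on the support of \<open>F\<close>, removing its greatest term \<open>a\<close> and passing to
  the ideal \<open>I + a (I : a^s)\<close>, which still contains all convolutions.\<close>
lemma products_in_radical_induct:
  fixes F H :: "'a \<Rightarrow> 'k::comm_ring_1"
  assumes R: "subring R" and H: "finite (supp H)" "\<And>q. H q \<in> R"
  shows "ideal R I \<Longrightarrow> finite (supp F) \<Longrightarrow> card (supp F) \<le> n \<Longrightarrow> (\<And>p. F p \<in> R)
    \<Longrightarrow> (\<And>m. convolution F H m \<in> I) \<Longrightarrow> F p * H q \<in> radical I"
proof (induction n arbitrary: F I p)
  case 0
  then have "(F p * H q) ^ 1 \<in> I"
    using idealD(2) by (simp add: supp_empty_imp_zero)
  then show ?case
    unfolding radical_def by blast
next
  case (Suc n)
  note I = Suc.prems(1) and F = Suc.prems(2,4)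
  show ?case
  proof (cases "supp F = {} \<or> H q = 0")
    case True
    then have "(F p * H q) ^ 1 \<in> I"
      using idealD(2)[OF I] by (auto simp: supp_empty_imp_zero)
    then show ?thesis
      unfolding radical_def by blast
  next
    case False
    obtain tF where tF: "tF \<in> supp F" "\<forall>p\<in>supp F. (p, tF) \<in> r"
      using finite_has_greatest[OF F(1)] False by blast
    define a where "a = F tF"
    have aR: "a \<in> R"
      using F(2) a_def by simp
    define s where "s = card (supp H)"
    have "q \<in> supp H"
      using False by (simp add: supp_def)
    then have s: "s \<ge> 1"
      using H(1) by (auto simp: s_def card_gt_0_iff Suc_le_eq)
    have greatest: "a ^ s * H q' \<in> I" for q'
      unfolding a_def s_def
      by (rule greatest_power_mult_in_ideal[OF R I F tF H(1) order.refl H(2) Suc.prems(5)])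
    define I' where "I' = subring.colon_extension R I a s"
    have I': "ideal R I'"
      unfolding I'_def by (rule subring.ideal_colon_extension[OF R I aR])
    define EF where "EF = (\<lambda>p. if p = tF then a else 0)"
    define F' where "F' = (\<lambda>p. 1 * F p + (- 1) * EF p)"
    have F'_tF: "F' tF = 0" and F'_other: "p' \<noteq> tF \<Longrightarrow> F' p' = F p'" for p'
      by (simp_all add: F'_def EF_def a_def)
    have supp: "supp F' \<subseteq> supp F - {tF}"
      by (auto simp: supp_def F'_def EF_def a_def)
    have "convolution F' H m \<in> I'" for m
    proof -
      let ?A = "{x\<in>{tF} \<times> supp H. fst x + snd x = m}"
      define w where "w = (\<Sum>x\<in>?A. H (snd x))"
      have "convolution EF H m = (\<Sum>x\<in>?A. EF (fst x) * H (snd x))"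
        by (rule convolution_eq_sum_superset) (use H(1) in \<open>auto simp: supp_def EF_def\<close>)
      also have "\<dots> = a * w"
        unfolding w_def sum_distrib_left by (rule sum.cong) (auto simp: EF_def)
      finally have "convolution EF H m = a * w" .
      moreover have "finite (supp EF)"
        by (simp add: EF_def supp_def)
      ultimately have "convolution F' H m = convolution F H m + a * (- w)"
        using convolution_linear_left[OF F(1) H(1), of EF 1 "- 1" m] unfolding F'_def by simp
      moreover have w: "- w \<in> R"
        unfolding w_def using H(2) R by (simp add: subring.uminus_closed subring.sum_closed)
      moreover have "a ^ s * w \<in> I"
        unfolding w_def sum_distrib_left by (rule ideal_sum[OF I greatest])
      then have "a ^ s * (- w) \<in> I"
        using subring.ideal_diff[OF R I idealD(2)[OF I]] by fastforce
      ultimately show ?thesis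
        unfolding I'_def using subring.colon_extensionI[OF R Suc.prems(5) w] by simp
    qed
    moreover have "finite (supp F')"
      using supp F(1) finite_subset by blast
    moreover have "card (supp F') \<le> n"
      using card_mono[OF _ supp] F(1) Suc.prems(3) tF(1) by simp
    moreover have "F' p' \<in> R" for p'
      using F'_tF F'_other F(2) subring.zero_closed[OF R] by (cases "p' = tF") simp_all
    ultimately have IH: "F' p * H q \<in> radical I'"
      using Suc.IH[OF I'] by blast
    show ?thesis
    proof (cases "p = tF")
      case True
      have "(a * H q) ^ s = (a ^ s * H q) * H q ^ (s - 1)"
        using s by (cases s) (simp_all add: power_mult_distrib algebra_simps)
      then have "(a * H q) ^ s \<in> I"
        using idealD(5)[OF I subring.power_closed[OF R H(2)] greatest] by simp
      then show ?thesis
        unfolding radical_def a_def True by blast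
    next
      case False
      obtain N where "(F p * H q) ^ N \<in> I'"
        using IH F'_other[OF False] unfolding radical_def by auto
      then have "((F p * H q) ^ N) ^ s \<in> I"
        unfolding I'_def by (rule subring.power_in_ideal_of_colon_extension[OF R I aR s])
      then show ?thesis
        unfolding radical_def power_mult[symmetric] by blast
    qed
  qed
qed

lemma products_in_radical:
  fixes F H :: "'a \<Rightarrow> 'k::comm_ring_1"
  assumes "subring R" "ideal R I"
    and "finite (supp F)" "\<And>p. F p \<in> R" "finite (supp H)" "\<And>q. H q \<in> R"
    and "\<And>m. convolution F H m \<in> I"
  shows "F p * H q \<in> radical I"
  using products_in_radical_induct[OF assms(1,5,6,2,3) order.refl assms(4,7)] .

end

section \<open>Generated ideals and semistar operations\<close>

lemma gen_idealI:
  "finite F \<Longrightarrow> F \<subseteq> S \<Longrightarrow> (\<And>s. s \<in> F \<Longrightarrow> c s \<in> R) \<Longrightarrow> x = (\<Sum>s\<in>F. c s * s) \<Longrightarrow> x \<in> gen_ideal R S"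
  unfolding gen_ideal_def by blast

lemma gen_idealE:
  assumes "x \<in> gen_ideal R S"
  obtains F c where "finite F" "F \<subseteq> S" "\<forall>s\<in>F. c s \<in> R" "x = (\<Sum>s\<in>F. c s * s)"
  using assms unfolding gen_ideal_def by blast

lemma gen_ideal_least:
  assumes E: "submodule R E" and "S \<subseteq> E"
  shows "gen_ideal R S \<subseteq> E"
proof
  fix x assume "x \<in> gen_ideal R S"
  then obtain F c where "finite F" "F \<subseteq> S" "\<forall>s\<in>F. c s \<in> R" "x = (\<Sum>s\<in>F. c s * s)"
    by (rule gen_idealE)
  then show "x \<in> E"
    using assms(2) submoduleD(3)[OF E] submodule_sum[OF E, of F "\<lambda>s. c s * s"] by blast
qed

lemma gen_ideal_nonzero_generator:
  assumes "nz_submod R (gen_ideal R S)"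
  obtains s where "s \<in> S" "s \<noteq> 0"
proof -
  have "gen_ideal R S \<noteq> {0}" "0 \<in> gen_ideal R S"
    using assms unfolding nz_submod_def by blast+
  moreover have "gen_ideal R S \<subseteq> {0}" if "S \<subseteq> {0}"
  proof
    fix x assume "x \<in> gen_ideal R S"
    then obtain F c where "finite F" "F \<subseteq> S" "\<forall>s\<in>F. c s \<in> R" "x = (\<Sum>s\<in>F. c s * s)"
      by (rule gen_idealE)
    moreover have "(\<Sum>s\<in>F. c s * s) = 0"
      using calculation(2) that by (intro sum.neutral) auto
    ultimately show "x \<in> {0}"
      by simp
  qed
  ultimately show ?thesis
    using that by blast
qed

context
  fixes R :: "'k::field set"
  assumes R: "subring R"
begin

lemma gen_ideal_base: "s \<in> S \<Longrightarrow> s \<in> gen_ideal R S"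
  by (rule gen_idealI[of "{s}" _ "\<lambda>_. 1"]) (simp_all add: subring.one_closed[OF R])

lemma gen_ideal_add:
  assumes "x \<in> gen_ideal R S" "y \<in> gen_ideal R S"
  shows "x + y \<in> gen_ideal R S"
proof -
  obtain F c where F: "finite F" "F \<subseteq> S" "\<forall>s\<in>F. c s \<in> R" "x = (\<Sum>s\<in>F. c s * s)"
    using assms(1) by (rule gen_idealE)
  obtain G d where G: "finite G" "G \<subseteq> S" "\<forall>s\<in>G. d s \<in> R" "y = (\<Sum>s\<in>G. d s * s)"
    using assms(2) by (rule gen_idealE)
  define e where "e s = (if s \<in> F then c s else 0) + (if s \<in> G then d s else 0)" for s
  have "x = (\<Sum>s\<in>F \<union> G. (if s \<in> F then c s else 0) * s)"
    unfolding F(4) using F(1) G(1) by (intro sum.mono_neutral_cong_left) auto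
  moreover have "y = (\<Sum>s\<in>F \<union> G. (if s \<in> G then d s else 0) * s)"
    unfolding G(4) using F(1) G(1) by (intro sum.mono_neutral_cong_left) auto
  ultimately have "x + y = (\<Sum>s\<in>F \<union> G. e s * s)"
    by (simp add: e_def distrib_right sum.distrib)
  moreover have "e s \<in> R" for s
    unfolding e_def using F(3) G(3) subring.add_closed[OF R] subring.zero_closed[OF R] by simp
  ultimately show ?thesis
    using F(1,2) G(1,2) by (intro gen_idealI[of "F \<union> G" _ e]) auto
qed

lemma submodule_gen_ideal: "submodule R (gen_ideal R S)"
  unfolding submodule_def
proof (intro conjI ballI)
  show "0 \<in> gen_ideal R S"
    by (rule gen_idealI[of "{}"]) simp_all
next
  fix x y assume "x \<in> gen_ideal R S" "y \<in> gen_ideal R S"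
  then show "x + y \<in> gen_ideal R S"
    by (rule gen_ideal_add)
next
  fix a x assume a: "a \<in> R" and "x \<in> gen_ideal R S"
  from this(2) obtain F c where F: "finite F" "F \<subseteq> S" "\<forall>s\<in>F. c s \<in> R" "x = (\<Sum>s\<in>F. c s * s)"
    by (rule gen_idealE)
  have "a * x = (\<Sum>s\<in>F. (a * c s) * s)"
    using F(4) by (simp add: sum_distrib_left mult.assoc)
  then show "a * x \<in> gen_ideal R S"
    using F(1,2,3) subring.mult_closed[OF R a] by (intro gen_idealI[of F]) auto
qed

lemma ideal_gen_ideal: "S \<subseteq> R \<Longrightarrow> ideal R (gen_ideal R S)"
  unfolding ideal_def
  using gen_ideal_least[OF subring.submodule_self[OF R]] submodule_gen_ideal by blast

lemma nz_submod_gen_ideal: "s \<in> S \<Longrightarrow> s \<noteq> 0 \<Longrightarrow> nz_submod R (gen_ideal R S)"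
  using submodule_gen_ideal[of S] gen_ideal_base[of s S] unfolding nz_submod_def submodule_def by blast

lemma nz_submod_self: "nz_submod R R"
  using subring.submodule_self[OF R] subring.one_closed[OF R] unfolding nz_submod_def submodule_def
  by force

end

lemma nz_submod_scale:
  assumes x: "x \<noteq> 0" and E: "nz_submod R E"
  shows "nz_submod R ((*) x ` E)"
  unfolding nz_submod_def
proof (intro conjI ballI)
  show "0 \<in> (*) x ` E"
    using E unfolding nz_submod_def by force
next
  fix u v assume "u \<in> (*) x ` E" "v \<in> (*) x ` E"
  then obtain u' v' where "u' \<in> E" "v' \<in> E" "u = x * u'" "v = x * v'"
    by blast
  moreover have "u' + v' \<in> E"
    using calculation E unfolding nz_submod_def by blast
  ultimately show "u + v \<in> (*) x ` E"
    by (metis distrib_left imageI)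
next
  fix a u assume a: "a \<in> R" and "u \<in> (*) x ` E"
  then obtain u' where "u' \<in> E" "u = x * u'"
    by blast
  moreover have "a * u' \<in> E"
    using calculation E a unfolding nz_submod_def by blast
  ultimately show "a * u \<in> (*) x ` E"
    by (metis mult.left_commute imageI)
next
  obtain e where "e \<in> E" "e \<noteq> 0"
    using E unfolding nz_submod_def by blast
  then show "(*) x ` E \<noteq> {0}"
    using x by (metis imageI mult_eq_0_iff singletonD)
qed

locale semistar_operation = subring R for R :: "'k::field set" +
  fixes st :: "'k set \<Rightarrow> 'k set"
  assumes semistar: "semistar R st"
begin

lemma nz_submod_st: "nz_submod R E \<Longrightarrow> nz_submod R (st E)"
  using semistar unfolding semistar_def by metis

lemma st_scale: "x \<noteq> 0 \<Longrightarrow> nz_submod R E \<Longrightarrow> st ((*) x ` E) = (*) x ` st E"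
  using semistar unfolding semistar_def by metis

lemma st_mono: "nz_submod R E \<Longrightarrow> nz_submod R F \<Longrightarrow> E \<subseteq> F \<Longrightarrow> st E \<subseteq> st F"
  using semistar unfolding semistar_def by metis

lemma st_extensive: "nz_submod R E \<Longrightarrow> E \<subseteq> st E"
  using semistar unfolding semistar_def by metis

lemma st_idem: "nz_submod R E \<Longrightarrow> st (st E) = st E"
  using semistar unfolding semistar_def by metis

text \<open>For \<open>E \<subseteq> R\<close>, fullness means \<open>E\<^sup>\<star> = R\<^sup>\<star>\<close>.\<close>
definition full :: "'k set \<Rightarrow> bool" where
  "full E \<longleftrightarrow> nz_submod R E \<and> st R \<subseteq> st E"

lemma full_iff_st_eq: "E \<subseteq> R \<Longrightarrow> full E \<longleftrightarrow> nz_submod R E \<and> st E = st R"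
  unfolding full_def using st_mono[OF _ nz_submod_self[OF subring_axioms]] by blast

lemma full_mono: "full E \<Longrightarrow> nz_submod R F \<Longrightarrow> E \<subseteq> F \<Longrightarrow> full F"
  unfolding full_def using st_mono by blast

text \<open>For \<open>s \<in> S\<close> the ideal \<open>s T\<close> lies in \<open>P\<close>, so \<open>s R\<^sup>\<star> \<subseteq> s (T)\<^sup>\<star> \<subseteq> P\<^sup>\<star>\<close> puts \<open>s\<close>
  into \<open>P\<^sup>\<star>\<close>; hence \<open>(S)\<^sup>\<star> \<subseteq> P\<^sup>\<star>\<close>.\<close>
lemma full_of_products:
  assumes S: "full (gen_ideal R S)" and T: "full (gen_ideal R T)"
    and P: "nz_submod R P" and prod: "\<And>s t. s \<in> S \<Longrightarrow> t \<in> T \<Longrightarrow> s * t \<in> P"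
  shows "full P"
proof -
  have nP: "nz_submod R (st P)"
    by (rule nz_submod_st[OF P])
  have nT: "nz_submod R (gen_ideal R T)"
    using T unfolding full_def by blast
  have "s \<in> st P" if s: "s \<in> S" for s
  proof (cases "s = 0")
    case True
    then show ?thesis
      using nP unfolding nz_submod_def by simp
  next
    case False
    have "(*) s ` gen_ideal R T \<subseteq> P"
    proof
      fix y assume "y \<in> (*) s ` gen_ideal R T"
      then obtain x where x: "x \<in> gen_ideal R T" "y = s * x"
        by blast
      obtain F c where F: "finite F" "F \<subseteq> T" "\<forall>t\<in>F. c t \<in> R" "x = (\<Sum>t\<in>F. c t * t)"
        using x(1) by (rule gen_idealE)
      have "s * x = (\<Sum>t\<in>F. c t * (s * t))"
        using F(4) by (simp add: sum_distrib_left mult_ac)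
      also have "\<dots> \<in> P"
        using F(2,3) prod[OF s] submoduleD(3)[OF nz_submod_imp_submodule[OF P]]
        by (intro submodule_sum[OF nz_submod_imp_submodule[OF P]]) blast
      finally show "y \<in> P"
        using x(2) by simp
    qed
    then have "st ((*) s ` gen_ideal R T) \<subseteq> st P"
      by (rule st_mono[OF nz_submod_scale[OF False nT] P])
    moreover have "1 \<in> st (gen_ideal R T)"
      using T st_extensive[OF nz_submod_self[OF subring_axioms]] unfolding full_def by blast
    ultimately show ?thesis
      using st_scale[OF False nT] by force
  qed
  then have "gen_ideal R S \<subseteq> st P"
    by (intro gen_ideal_least[OF nz_submod_imp_submodule[OF nP]]) blast
  then have "st (gen_ideal R S) \<subseteq> st P"
    using st_mono[OF _ nP] st_idem[OF P] S unfolding full_def by blast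
  then show ?thesis
    using S P unfolding full_def by blast
qed

lemma full_gen_ideal_square:
  assumes "insert x U \<subseteq> R" and full: "full (gen_ideal R (insert x U))"
  shows "full (gen_ideal R (insert (x * x) U))"
proof (rule full_of_products[OF full full])
  obtain v where "v \<in> insert x U" "v \<noteq> 0"
    using full unfolding full_def by (blast elim: gen_ideal_nonzero_generator)
  then show "nz_submod R (gen_ideal R (insert (x * x) U))"
    using nz_submod_gen_ideal[OF subring_axioms] by (metis insertCI insertE mult_eq_0_iff)
next
  let ?J = "gen_ideal R (insert (x * x) U)"
  fix s t assume s: "s \<in> insert x U" and t: "t \<in> insert x U"
  have base: "u \<in> ?J" if "u \<in> U \<or> u = x * x" for u
    using gen_ideal_base[OF subring_axioms] that by blast
  have mult: "a * u \<in> ?J" if "a \<in> R" "u \<in> ?J" for a u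
    using submoduleD(3)[OF submodule_gen_ideal[OF subring_axioms]] that .
  show "s * t \<in> ?J"
    using s t assms(1) base mult[of s t] mult[of t s] by (auto simp: mult.commute)
qed

lemma full_gen_ideal_power2:
  assumes "insert x U \<subseteq> R" and "full (gen_ideal R (insert x U))"
  shows "full (gen_ideal R (insert (x ^ 2 ^ k) U))"
proof (induction k)
  case 0
  then show ?case using assms(2) by simp
next
  case (Suc k)
  have "insert (x ^ 2 ^ k) U \<subseteq> R"
    using assms(1) power_closed by blast
  then have "full (gen_ideal R (insert (x ^ 2 ^ k * x ^ 2 ^ k) U))"
    using full_gen_ideal_square Suc.IH by blast
  then show ?case
    by (simp add: power_add[symmetric] mult_2)
qed

text \<open>Generators with a power in \<open>I\<close> are replaced one at a time by such a power, reached
  by repeated squaring.\<close>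
lemma full_of_radical_generators:
  assumes I: "ideal R I"
  shows "finite T \<Longrightarrow> T \<subseteq> R \<Longrightarrow> T \<subseteq> radical I \<Longrightarrow> S \<subseteq> I \<Longrightarrow> full (gen_ideal R (S \<union> T))
    \<Longrightarrow> full I"
proof (induction T arbitrary: S rule: finite_induct)
  case empty
  have "gen_ideal R S \<subseteq> I"
    using gen_ideal_least I empty.prems(3) unfolding ideal_def by blast
  moreover obtain y where "y \<in> gen_ideal R S" "y \<noteq> 0"
    using empty.prems(4) unfolding full_def nz_submod_def Un_empty_right by blast
  ultimately have "nz_submod R I"
    using I unfolding nz_submod_iff_submodule ideal_def by blast
  then show ?case
    using full_mono empty.prems(4) \<open>gen_ideal R S \<subseteq> I\<close> by simp
next
  case (insert x T)
  obtain N where N: "x ^ N \<in> I"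
    using insert.prems(2) unfolding radical_def by blast
  have "N < 2 ^ N"
    by (rule less_exp)
  then have "x ^ 2 ^ N = x ^ (2 ^ N - N) * x ^ N"
    by (simp add: power_add[symmetric])
  then have xI: "x ^ 2 ^ N \<in> I"
    using idealD(4)[OF I power_closed N] insert.prems(1) by simp
  have "insert x (S \<union> T) \<subseteq> R"
    using insert.prems(1,3) idealD(1)[OF I] by blast
  moreover have "full (gen_ideal R (insert x (S \<union> T)))"
    using insert.prems(4) by (simp add: Un_insert_right)
  ultimately have "full (gen_ideal R (insert (x ^ 2 ^ N) S \<union> T))"
    using full_gen_ideal_power2 by simp
  moreover have "insert (x ^ 2 ^ N) S \<subseteq> I"
    using insert.prems(3) xI by simp
  moreover have "T \<subseteq> R" "T \<subseteq> radical I"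
    using insert.prems(1,2) by simp_all
  ultimately show ?case
    using insert.IH by blast
qed

end

section \<open>Graded domains\<close>

locale graded =
  fixes Rg :: "'g::cancel_comm_monoid_add \<Rightarrow> 'k::field set" and R :: "'k set"
  assumes graded_domain: "graded_domain Rg R"
begin

lemma homogeneous_zero: "0 \<in> Rg \<alpha>"
  using graded_domain unfolding graded_domain_def by metis

lemma homogeneous_add: "x \<in> Rg \<alpha> \<Longrightarrow> y \<in> Rg \<alpha> \<Longrightarrow> x + y \<in> Rg \<alpha>"
  using graded_domain unfolding graded_domain_def by metis

lemma homogeneous_uminus: "x \<in> Rg \<alpha> \<Longrightarrow> - x \<in> Rg \<alpha>"
  using graded_domain unfolding graded_domain_def by metis

lemma homogeneous_mult: "x \<in> Rg \<alpha> \<Longrightarrow> y \<in> Rg \<beta> \<Longrightarrow> x * y \<in> Rg (\<alpha> + \<beta>)"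
  using graded_domain unfolding graded_domain_def by metis

lemma hsum_eq_0_imp_zero: "hom_family Rg h \<Longrightarrow> hsum h = 0 \<Longrightarrow> h \<beta> = 0"
  using graded_domain unfolding graded_domain_def by metis

lemma R_eq_hsums: "R = {hsum h | h. hom_family Rg h}"
  using graded_domain unfolding graded_domain_def by metis

lemma one_in_R: "1 \<in> R"
  using graded_domain unfolding graded_domain_def by metis

lemma hom_familyD: "hom_family Rg h \<Longrightarrow> h \<beta> \<in> Rg \<beta>" "hom_family Rg h \<Longrightarrow> finite (supp h)"
  unfolding hom_family_def supp_def by auto

lemma hom_familyI: "(\<And>\<beta>. h \<beta> \<in> Rg \<beta>) \<Longrightarrow> finite (supp h) \<Longrightarrow> hom_family Rg h"
  unfolding hom_family_def supp_def by auto

lemma hsum_eq_sum_superset: "finite S \<Longrightarrow> supp h \<subseteq> S \<Longrightarrow> hsum h = (\<Sum>\<beta>\<in>S. h \<beta>)"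
  unfolding hsum_def by (rule sum.mono_neutral_left) (auto simp: supp_def)

lemma sum_homogeneous: "(\<And>x. x \<in> A \<Longrightarrow> f x \<in> Rg \<alpha>) \<Longrightarrow> sum f A \<in> Rg \<alpha>"
  by (induct A rule: infinite_finite_induct) (auto intro: homogeneous_zero homogeneous_add)

lemma hom_family_group_by_degree:
  assumes P: "finite P" and v: "\<And>x. x \<in> P \<Longrightarrow> v x \<in> Rg (d x)"
  shows "hom_family Rg (\<lambda>\<alpha>. \<Sum>x\<in>{x\<in>P. d x = \<alpha>}. v x)"
    and "hsum (\<lambda>\<alpha>. \<Sum>x\<in>{x\<in>P. d x = \<alpha>}. v x) = (\<Sum>x\<in>P. v x)"
proof -
  let ?h = "\<lambda>\<alpha>. \<Sum>x\<in>{x\<in>P. d x = \<alpha>}. v x"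
  have supp: "supp ?h \<subseteq> d ` P"
  proof
    fix \<alpha> assume "\<alpha> \<in> supp ?h"
    then have "?h \<alpha> \<noteq> 0"
      by (simp add: supp_def)
    then have "{x\<in>P. d x = \<alpha>} \<noteq> {}"
      by (metis sum.empty)
    then show "\<alpha> \<in> d ` P"
      by blast
  qed
  show "hom_family Rg ?h"
  proof (rule hom_familyI)
    show "?h \<alpha> \<in> Rg \<alpha>" for \<alpha>
      using v by (intro sum_homogeneous) auto
    show "finite (supp ?h)"
      using finite_subset[OF supp] P by simp
  qed
  have "hsum ?h = (\<Sum>\<alpha>\<in>d ` P. ?h \<alpha>)"
    using P by (intro hsum_eq_sum_superset[OF _ supp]) simp
  also have "\<dots> = (\<Sum>x\<in>P. v x)"
    by (rule sum.group[OF P]) (use P in auto)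
  finally show "hsum ?h = (\<Sum>x\<in>P. v x)" .
qed

lemma hom_family_diff:
  assumes "hom_family Rg h1" "hom_family Rg h2"
  shows "hom_family Rg (\<lambda>\<beta>. h1 \<beta> - h2 \<beta>)" "hsum (\<lambda>\<beta>. h1 \<beta> - h2 \<beta>) = hsum h1 - hsum h2"
proof -
  let ?S = "supp h1 \<union> supp h2"
  have fin: "finite ?S"
    using hom_familyD(2)[OF assms(1)] hom_familyD(2)[OF assms(2)] by simp
  have supp: "supp (\<lambda>\<beta>. h1 \<beta> - h2 \<beta>) \<subseteq> ?S"
    by (auto simp: supp_def)
  show "hom_family Rg (\<lambda>\<beta>. h1 \<beta> - h2 \<beta>)"
    using homogeneous_add[OF hom_familyD(1)[OF assms(1)] homogeneous_uminus[OF hom_familyD(1)[OF assms(2)]]]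
      finite_subset[OF supp fin] by (intro hom_familyI) simp_all
  have "hsum (\<lambda>\<beta>. h1 \<beta> - h2 \<beta>) = (\<Sum>\<beta>\<in>?S. h1 \<beta>) - (\<Sum>\<beta>\<in>?S. h2 \<beta>)"
    by (simp add: hsum_eq_sum_superset[OF fin supp] sum_subtractf)
  also have "\<dots> = hsum h1 - hsum h2"
    using hsum_eq_sum_superset[OF fin, of h1] hsum_eq_sum_superset[OF fin, of h2] by simp
  finally show "hsum (\<lambda>\<beta>. h1 \<beta> - h2 \<beta>) = hsum h1 - hsum h2" .
qed

lemma hom_family_unique:
  assumes "hom_family Rg h1" "hom_family Rg h2" "hsum h1 = hsum h2"
  shows "h1 = h2"
proof
  fix \<beta>
  have "h1 \<beta> - h2 \<beta> = 0"
    using hsum_eq_0_imp_zero[OF hom_family_diff(1)[OF assms(1,2)]] hom_family_diff(2)[OF assms(1,2)] assms(3)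
    by simp
  then show "h1 \<beta> = h2 \<beta>"
    by simp
qed

lemma hcomp_hsum:
  assumes h: "hom_family Rg h"
  shows "hcomp Rg (hsum h) = h"
proof
  fix \<alpha>
  show "hcomp Rg (hsum h) \<alpha> = h \<alpha>"
    unfolding hcomp_def
  proof (rule the_equality)
    fix y assume "\<exists>h'. hom_family Rg h' \<and> hsum h = hsum h' \<and> y = h' \<alpha>"
    then show "y = h \<alpha>"
      using hom_family_unique[OF h] by metis
  qed (use h in blast)
qed

lemma hom_family_hcomp: "x \<in> R \<Longrightarrow> hom_family Rg (hcomp Rg x)"
  and hsum_hcomp: "x \<in> R \<Longrightarrow> hsum (hcomp Rg x) = x"
  using hcomp_hsum R_eq_hsums by auto

lemma hsum_in_R: "hom_family Rg h \<Longrightarrow> hsum h \<in> R"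
  using R_eq_hsums by blast

lemma homogeneous_in_R:
  assumes x: "x \<in> Rg \<alpha>"
  shows "x \<in> R"
proof -
  let ?h = "\<lambda>\<beta>. if \<beta> = \<alpha> then x else 0"
  have supp: "supp ?h \<subseteq> {\<alpha>}"
    by (auto simp: supp_def)
  have "hom_family Rg ?h"
    using x homogeneous_zero finite_subset[OF supp] by (intro hom_familyI) auto
  moreover have "hsum ?h = x"
    using hsum_eq_sum_superset[OF _ supp] by simp
  ultimately show ?thesis
    using hsum_in_R by metis
qed

lemma hcomp_homogeneous: "x \<in> R \<Longrightarrow> hcomp Rg x \<alpha> \<in> Rg \<alpha>"
  using hom_familyD(1)[OF hom_family_hcomp] .

lemma hcomp_in_R: "x \<in> R \<Longrightarrow> hcomp Rg x \<alpha> \<in> R"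
  using homogeneous_in_R[OF hcomp_homogeneous] .

lemma hcomp_zero: "hcomp Rg 0 \<alpha> = 0"
proof -
  have "hom_family Rg (\<lambda>_. 0)"
    by (rule hom_familyI) (auto simp: homogeneous_zero supp_def)
  moreover have "hsum (\<lambda>_::'g. 0::'k) = 0"
    by (simp add: hsum_def)
  ultimately show ?thesis
    using hcomp_hsum by metis
qed

lemma diff_in_R:
  assumes "x \<in> R" "y \<in> R"
  shows "x - y \<in> R"
proof -
  note hom = hom_family_hcomp[OF assms(1)] hom_family_hcomp[OF assms(2)]
  have "hsum (\<lambda>\<beta>. hcomp Rg x \<beta> - hcomp Rg y \<beta>) \<in> R"
    by (rule hsum_in_R[OF hom_family_diff(1)[OF hom]])
  then show ?thesis
    using hom_family_diff(2)[OF hom] hsum_hcomp assms by simp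
qed

lemma mult_in_R:
  assumes x: "x \<in> R" and y: "y \<in> R"
  shows "x * y \<in> R"
proof -
  let ?P = "supp (hcomp Rg x) \<times> supp (hcomp Rg y)"
  have P: "finite ?P"
    using hom_familyD(2)[OF hom_family_hcomp] x y by blast
  have v: "hcomp Rg x (fst p) * hcomp Rg y (snd p) \<in> Rg (fst p + snd p)" for p
    using hcomp_homogeneous x y by (intro homogeneous_mult)
  have "x * y = (\<Sum>\<alpha>\<in>supp (hcomp Rg x). hcomp Rg x \<alpha>) * (\<Sum>\<beta>\<in>supp (hcomp Rg y). hcomp Rg y \<beta>)"
    using hsum_hcomp[OF x] hsum_hcomp[OF y] by (simp add: hsum_def supp_def)
  also have "\<dots> = (\<Sum>p\<in>?P. hcomp Rg x (fst p) * hcomp Rg y (snd p))"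
    by (simp add: sum_product sum.cartesian_product case_prod_beta)
  finally show ?thesis
    using hsum_in_R[OF hom_family_group_by_degree(1)[OF P v]] hom_family_group_by_degree(2)[OF P v]
    by simp
qed

sublocale subring R
proof
  show "0 \<in> R" "1 \<in> R"
    using homogeneous_in_R[OF homogeneous_zero] one_in_R .
  fix x y assume x: "x \<in> R" and y: "y \<in> R"
  show "x * y \<in> R"
    using x y by (rule mult_in_R)
  show "- x \<in> R"
    using diff_in_R[OF homogeneous_in_R[OF homogeneous_zero] x] by simp
  then show "x + y \<in> R"
    using diff_in_R[OF y, of "- x"] by (simp add: add.commute)
qed

end

section \<open>Homogeneous components of polynomials\<close>

text \<open>The homogeneous components of all coefficients of \<open>f\<close>, indexed by
  (exponent, degree); their products are graded by the monoid \<open>\<nat> \<times> \<Gamma>\<close>.\<close>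
definition homogeneous_coeffs :: "('g \<Rightarrow> 'k::field set) \<Rightarrow> 'k poly \<Rightarrow> nat \<times> 'g \<Rightarrow> 'k" where
  "homogeneous_coeffs Rg f p = hcomp Rg (coeff f (fst p)) (snd p)"

context graded
begin

lemma Rpoly_coeff: "f \<in> Rpoly R \<Longrightarrow> coeff f i \<in> R"
  unfolding Rpoly_def by blast

lemma homogeneous_coeffs_in_R: "f \<in> Rpoly R \<Longrightarrow> homogeneous_coeffs Rg f p \<in> R"
  unfolding homogeneous_coeffs_def by (rule hcomp_in_R[OF Rpoly_coeff])

lemma homogeneous_coeffs_homogeneous: "f \<in> Rpoly R \<Longrightarrow> homogeneous_coeffs Rg f p \<in> Rg (snd p)"
  unfolding homogeneous_coeffs_def by (rule hcomp_homogeneous[OF Rpoly_coeff])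

lemma finite_supp_homogeneous_coeffs:
  assumes f: "f \<in> Rpoly R"
  shows "finite (supp (homogeneous_coeffs Rg f))"
proof -
  have "supp (homogeneous_coeffs Rg f) \<subseteq> (\<Union>i\<le>degree f. {i} \<times> supp (hcomp Rg (coeff f i)))"
  proof
    fix p assume "p \<in> supp (homogeneous_coeffs Rg f)"
    then have p: "hcomp Rg (coeff f (fst p)) (snd p) \<noteq> 0"
      by (simp add: supp_def homogeneous_coeffs_def)
    then have "coeff f (fst p) \<noteq> 0"
      using hcomp_zero by auto
    then have "fst p \<le> degree f"
      by (rule le_degree)
    then show "p \<in> (\<Union>i\<le>degree f. {i} \<times> supp (hcomp Rg (coeff f i)))"
      using p by (cases p) (auto simp: supp_def)
  qed
  moreover have "finite (\<Union>i\<le>degree f. {i} \<times> supp (hcomp Rg (coeff f i)))"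
    using hom_familyD(2)[OF hom_family_hcomp[OF Rpoly_coeff[OF f]]] by blast
  ultimately show ?thesis
    using finite_subset by blast
qed

lemma coeff_eq_sum_hcomp:
  "f \<in> Rpoly R \<Longrightarrow> coeff f i = (\<Sum>\<alpha>\<in>supp (hcomp Rg (coeff f i)). hcomp Rg (coeff f i) \<alpha>)"
  using hsum_hcomp[OF Rpoly_coeff, of f i] unfolding hsum_def supp_def by simp

lemma poly_eq_sum_homogeneous_monoms:
  assumes f: "f \<in> Rpoly R"
  shows "f = (\<Sum>p\<in>supp (homogeneous_coeffs Rg f). monom (homogeneous_coeffs Rg f p) (fst p))"
proof (rule poly_eqI)
  fix i
  let ?F = "homogeneous_coeffs Rg f"
  let ?S = "supp ?F" and ?A = "supp (hcomp Rg (coeff f i))"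
  have "coeff (\<Sum>p\<in>?S. monom (?F p) (fst p)) i = (\<Sum>p\<in>{p\<in>?S. fst p = i}. ?F p)"
    by (simp add: coeff_sum sum.inter_filter[OF finite_supp_homogeneous_coeffs[OF f]])
  also have "{p\<in>?S. fst p = i} = Pair i ` ?A"
    by (auto simp: supp_def homogeneous_coeffs_def)
  also have "(\<Sum>p\<in>Pair i ` ?A. ?F p) = (\<Sum>\<alpha>\<in>?A. ?F (i, \<alpha>))"
    by (simp add: sum.reindex inj_on_def)
  also have "\<dots> = coeff f i"
    using coeff_eq_sum_hcomp[OF f, of i] by (simp add: homogeneous_coeffs_def)
  finally show "coeff f i = coeff (\<Sum>p\<in>?S. monom (?F p) (fst p)) i"
    by simp
qed

lemma coeff_mult_homogeneous:
  assumes f: "f \<in> Rpoly R" and g: "g \<in> Rpoly R"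
  defines "F \<equiv> homogeneous_coeffs Rg f" and "G \<equiv> homogeneous_coeffs Rg g"
  shows "coeff (f * g) k
    = (\<Sum>x\<in>{x\<in>supp F \<times> supp G. fst (fst x) + fst (snd x) = k}. F (fst x) * G (snd x))"
proof -
  have fin: "finite (supp F \<times> supp G)"
    using finite_supp_homogeneous_coeffs f g unfolding F_def G_def by blast
  have "f * g = (\<Sum>p\<in>supp F. monom (F p) (fst p)) * (\<Sum>q\<in>supp G. monom (G q) (fst q))"
    using poly_eq_sum_homogeneous_monoms[OF f] poly_eq_sum_homogeneous_monoms[OF g]
    unfolding F_def G_def by simp
  also have "\<dots> = (\<Sum>x\<in>supp F \<times> supp G. monom (F (fst x) * G (snd x)) (fst (fst x) + fst (snd x)))"
    by (simp add: sum_product sum.cartesian_product mult_monom case_prod_beta)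
  finally show ?thesis
    by (simp add: coeff_sum sum.inter_filter[OF fin])
qed

lemma Rpoly_mult:
  assumes "f \<in> Rpoly R" "g \<in> Rpoly R"
  shows "f * g \<in> Rpoly R"
  unfolding Rpoly_def
proof (intro CollectI allI)
  fix n
  show "coeff (f * g) n \<in> R"
    unfolding coeff_mult using Rpoly_coeff assms by (intro sum_closed mult_closed)
qed

lemma homogeneous_coeffs_mult:
  assumes f: "f \<in> Rpoly R" and g: "g \<in> Rpoly R"
  shows "homogeneous_coeffs Rg (f * g) m
    = convolution (homogeneous_coeffs Rg f) (homogeneous_coeffs Rg g) m"
proof -
  obtain k \<gamma> where m: "m = (k, \<gamma>)"
    by (cases m)
  let ?F = "homogeneous_coeffs Rg f" and ?G = "homogeneous_coeffs Rg g"
  let ?P = "{x\<in>supp ?F \<times> supp ?G. fst (fst x) + fst (snd x) = k}"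
  let ?d = "\<lambda>x::(nat \<times> 'g) \<times> (nat \<times> 'g). snd (fst x) + snd (snd x)"
  let ?v = "\<lambda>x::(nat \<times> 'g) \<times> (nat \<times> 'g). ?F (fst x) * ?G (snd x)"
  have P: "finite ?P"
    using finite_supp_homogeneous_coeffs[OF f] finite_supp_homogeneous_coeffs[OF g] by simp
  have v: "?v x \<in> Rg (?d x)" for x
    using homogeneous_coeffs_homogeneous f g by (intro homogeneous_mult)
  have "coeff (f * g) k = hsum (\<lambda>\<gamma>. \<Sum>x\<in>{x\<in>?P. ?d x = \<gamma>}. ?v x)"
    using coeff_mult_homogeneous[OF f g, of k] hom_family_group_by_degree(2)[OF P v] by simp
  then have "hcomp Rg (coeff (f * g) k) \<gamma> = (\<Sum>x\<in>{x\<in>?P. ?d x = \<gamma>}. ?v x)"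
    using hcomp_hsum[OF hom_family_group_by_degree(1)[OF P v]] by simp
  also have "{x\<in>?P. ?d x = \<gamma>} = {x\<in>supp ?F \<times> supp ?G. fst x + snd x = m}"
    unfolding m by (auto simp: prod_eq_iff)
  finally show ?thesis
    unfolding convolution_def homogeneous_coeffs_def m by simp
qed

lemma Af_eq_gen_ideal: "Af Rg R f = gen_ideal R (range (homogeneous_coeffs Rg f))"
proof -
  have "{hcomp Rg (coeff f i) \<alpha> | i \<alpha>. True} = range (homogeneous_coeffs Rg f)"
    by (auto simp: homogeneous_coeffs_def image_def)
  then show ?thesis
    unfolding Af_def by simp
qed

lemma ideal_Af: "f \<in> Rpoly R \<Longrightarrow> ideal R (Af Rg R f)"
  unfolding Af_eq_gen_ideal
  by (rule ideal_gen_ideal[OF subring_axioms]) (use homogeneous_coeffs_in_R in blast)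

lemma Af_subset_R: "f \<in> Rpoly R \<Longrightarrow> Af Rg R f \<subseteq> R"
  using ideal_Af idealD(1) by blast

lemma coeff_in_Af:
  assumes f: "f \<in> Rpoly R"
  shows "coeff f i \<in> Af Rg R f"
proof -
  have "(\<Sum>\<alpha>\<in>supp (hcomp Rg (coeff f i)). hcomp Rg (coeff f i) \<alpha>) \<in> Af Rg R f"
    unfolding Af_eq_gen_ideal
  proof (rule submodule_sum[OF submodule_gen_ideal[OF subring_axioms]])
    fix \<alpha> show "hcomp Rg (coeff f i) \<alpha> \<in> gen_ideal R (range (homogeneous_coeffs Rg f))"
      by (rule gen_ideal_base[OF subring_axioms]) (auto simp: homogeneous_coeffs_def image_def)
  qed
  then show ?thesis
    using coeff_eq_sum_hcomp[OF f, of i] by simp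
qed

lemma nz_submod_Af:
  assumes f: "f \<in> Rpoly R" and "f \<noteq> 0"
  shows "nz_submod R (Af Rg R f)"
  unfolding nz_submod_iff_submodule
  using ideal_Af[OF f] coeff_in_Af[OF f, of "degree f"] \<open>f \<noteq> 0\<close>
  unfolding ideal_def by auto

lemma Af_one: "Af Rg R 1 = R"
proof
  have one: "1 \<in> Rpoly R"
    unfolding Rpoly_def by (simp add: coeff_1)
  then show "Af Rg R 1 \<subseteq> R"
    by (rule Af_subset_R)
  show "R \<subseteq> Af Rg R 1"
    using coeff_in_Af[OF one, of 0] submoduleD(3)[OF submodule_gen_ideal[OF subring_axioms]]
    unfolding Af_eq_gen_ideal by fastforce
qed

lemma Af_mult_subset:
  assumes f: "f \<in> Rpoly R" and g: "g \<in> Rpoly R"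
  shows "Af Rg R (f * g) \<subseteq> Af Rg R f" "Af Rg R (f * g) \<subseteq> Af Rg R g"
proof -
  let ?F = "homogeneous_coeffs Rg f" and ?G = "homogeneous_coeffs Rg g"
  have in_Af: "homogeneous_coeffs Rg h p \<in> Af Rg R h" for h p
    unfolding Af_eq_gen_ideal by (rule gen_ideal_base[OF subring_axioms]) simp
  have submodule: "submodule R (Af Rg R h)" if "h \<in> Rpoly R" for h
    using ideal_Af[OF that] unfolding ideal_def by blast
  have "range (homogeneous_coeffs Rg (f * g)) \<subseteq> Af Rg R f"
    using convolution_in_ideal_left[OF ideal_Af[OF f] in_Af homogeneous_coeffs_in_R[OF g]]
    by (auto simp: homogeneous_coeffs_mult[OF f g])
  then show "Af Rg R (f * g) \<subseteq> Af Rg R f"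
    unfolding Af_eq_gen_ideal[of "f * g"] by (rule gen_ideal_least[OF submodule[OF f]])
  have "range (homogeneous_coeffs Rg (f * g)) \<subseteq> Af Rg R g"
    using convolution_in_ideal_right[OF ideal_Af[OF g] homogeneous_coeffs_in_R[OF f] in_Af]
    by (auto simp: homogeneous_coeffs_mult[OF f g])
  then show "Af Rg R (f * g) \<subseteq> Af Rg R g"
    unfolding Af_eq_gen_ideal[of "f * g"] by (rule gen_ideal_least[OF submodule[OF g]])
qed

end

section \<open>The saturated set \<open>N(\<star>)\<close>\<close>

locale graded_semistar = graded Rg R + semistar_operation R st
  for Rg :: "'g::cancel_comm_monoid_add \<Rightarrow> 'k::field set" and R st
begin

lemma Nstar_iff_full: "f \<in> Nstar Rg R st \<longleftrightarrow> f \<in> Rpoly R \<and> f \<noteq> 0 \<and> full (Af Rg R f)"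
  unfolding Nstar_def using full_iff_st_eq[OF Af_subset_R] nz_submod_Af by blast

lemma one_in_Nstar: "1 \<in> Nstar Rg R st"
  unfolding Nstar_def Rpoly_def by (simp add: coeff_1 Af_one)

lemma full_Af_mult:
  assumes tf: "torsion_free_quotient TYPE('g)"
    and f: "f \<in> Rpoly R" "full (Af Rg R f)" and g: "g \<in> Rpoly R" "full (Af Rg R g)"
  shows "full (Af Rg R (f * g))"
proof -
  obtain r :: "((nat \<times> 'g) \<times> (nat \<times> 'g)) set"
    where "admissible_order r" "\<And>a b. (a, b) \<in> r \<or> (b, a) \<in> r"
    using exists_total_admissible_order[OF torsion_free_quotient_prod[OF torsion_free_quotient_nat tf]]
    by blast
  then interpret total_admissible_order r
    by (simp add: total_admissible_order_def total_admissible_order_axioms_def)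
  let ?F = "homogeneous_coeffs Rg f" and ?G = "homogeneous_coeffs Rg g"
  let ?I = "Af Rg R (f * g)"
  define T where "T = range (\<lambda>x. ?F (fst x) * ?G (snd x))"
  have I: "ideal R ?I"
    by (rule ideal_Af[OF Rpoly_mult[OF f(1) g(1)]])
  have F: "finite (supp ?F)" "\<And>p. ?F p \<in> R" and G: "finite (supp ?G)" "\<And>q. ?G q \<in> R"
    using finite_supp_homogeneous_coeffs homogeneous_coeffs_in_R f(1) g(1) by blast+
  have "T \<subseteq> insert 0 ((\<lambda>x. ?F (fst x) * ?G (snd x)) ` (supp ?F \<times> supp ?G))"
    unfolding T_def by (auto simp: supp_def)
  then have "finite T"
    using F(1) G(1) finite_subset by blast
  moreover have "T \<subseteq> R"
    unfolding T_def using F(2) G(2) mult_closed by blast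
  moreover have "convolution ?F ?G m \<in> ?I" for m
    using gen_ideal_base[OF subring_axioms, of _ "range (homogeneous_coeffs Rg (f * g))"]
    by (simp add: Af_eq_gen_ideal homogeneous_coeffs_mult[OF f(1) g(1), symmetric])
  then have "T \<subseteq> radical ?I"
    unfolding T_def using products_in_radical[OF subring_axioms I F G] by blast
  moreover have "full (gen_ideal R T)"
  proof (rule full_of_products)
    show "full (gen_ideal R (range ?F))" "full (gen_ideal R (range ?G))"
      using f(2) g(2) by (simp_all add: Af_eq_gen_ideal)
    obtain p q where "?F p \<noteq> 0" "?G q \<noteq> 0"
      using f(2) g(2) unfolding full_def Af_eq_gen_ideal
      by (metis (no_types, lifting) gen_ideal_nonzero_generator rangeE)
    then show "nz_submod R (gen_ideal R T)"
      unfolding T_def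
      by (intro nz_submod_gen_ideal[OF subring_axioms, of "?F p * ?G q"])
        (auto intro: range_eqI[of _ _ "(p, q)"])
    fix s t assume "s \<in> range ?F" "t \<in> range ?G"
    then have "s * t \<in> T"
      unfolding T_def by (auto intro: range_eqI[of _ _ "(_, _)"])
    then show "s * t \<in> gen_ideal R T"
      by (rule gen_ideal_base[OF subring_axioms])
  qed
  ultimately show ?thesis
    using full_of_radical_generators[OF I, of T "{}"] by simp
qed

lemma Nstar_mult_iff:
  assumes tf: "torsion_free_quotient TYPE('g)" and f: "f \<in> Rpoly R" and g: "g \<in> Rpoly R"
  shows "f * g \<in> Nstar Rg R st \<longleftrightarrow> f \<in> Nstar Rg R st \<and> g \<in> Nstar Rg R st"
proof
  assume "f * g \<in> Nstar Rg R st"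
  then have "f \<noteq> 0" "g \<noteq> 0" "full (Af Rg R (f * g))"
    unfolding Nstar_iff_full by auto
  then show "f \<in> Nstar Rg R st \<and> g \<in> Nstar Rg R st"
    unfolding Nstar_iff_full
    using f g Af_mult_subset[OF f g] full_mono nz_submod_Af by blast
next
  assume "f \<in> Nstar Rg R st \<and> g \<in> Nstar Rg R st"
  then show "f * g \<in> Nstar Rg R st"
    unfolding Nstar_iff_full using full_Af_mult[OF tf] Rpoly_mult by simp
qed

end

theorem lemma2p2:
  fixes Rg :: "'g::cancel_comm_monoid_add \<Rightarrow> 'k::field set"
    and R :: "'k set" and st :: "'k set \<Rightarrow> 'k set"
  assumes "torsion_free_quotient TYPE('g)"
    and "graded_domain Rg R"
    and "semistar R st"
  shows "saturated_mult_closed (Rpoly R) (Nstar Rg R st)"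
proof -
  interpret graded Rg R
    by (rule graded.intro) (rule assms(2))
  interpret graded_semistar Rg R st
    by unfold_locales (rule assms(3))
  show ?thesis
    unfolding saturated_mult_closed_def
    using one_in_Nstar Nstar_mult_iff[OF assms(1)] by (auto simp: Nstar_def)
qed

end
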